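(* Under Assumption 1, let $(x^k)_{k\in\mathbb{N}}$ be generated by PPGA. Then $x^k\in\mathrm{dom}(F)$ for all $k$, and: (i) $F(x^{k+1})+\frac{1/\alpha_k-L}{2g(x^{k+1})}\|x^{k+1}-x^k\|_2^2\le F(x^k)$ for all $k\in\mathbb{N}$; (ii) $\lim_{k\to\infty}C_k=\lim_{k\to\infty}F(x^k)=C$ for some $C\ge0$; (iii) $\lim_{k\to\infty}\frac{1/\alpha_k-L}{g(x^{k+1})}\|x^{k+1}-x^k\|_2^2=0$.
   Context: Let $f:\mathbb{R}^n\to(-\infty,+\infty]$ be proper lsc, $g,h:\mathbb{R}^n\to\mathbb{R}$, $\Omega:=\{x:g(x)\ne0\}$, $F(x):=\frac{f(x)+h(x)}{g(x)}$ on $\Omega\cap\mathrm{dom}(f)$ and $+\infty$ otherwise. Assumption 1: (i) $f$ locally Lipschitz on $\mathrm{dom}(f)\cap\Omega$; (ii) $g$ locally Lipschitz continuously differentiable and positive on $\Omega\cap\mathrm{dom}(f)$; (iii) $\nabla h$ is $L$-Lipschitz, $L>0$; (iv) $f+h\ge0$ on $\mathrm{dom}(f)$, $\Omega\cap\mathrm{dom}(f)\ne\emptyset$; (v) $\mathrm{prox}_{f-\gamma g}(x)\ne\emptyset$ for all $x$, $\gamma\ge0$; (vi) $F$ lsc and level bounded. $\mathrm{prox}_\varphi(x):=\arg\min_u\{\varphi(u)+\frac12\|u-x\|_2^2\}$. PPGA (parameterized proximal-gradient algorithm): choose $x^0\in\Omega\cap\mathrm{dom}(f)$ and step sizes $\alpha_k$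 with $0<\underline\alpha\le\alpha_k\le\overline\alpha<1/L$; for $k=0,1,\dots$ set $C_k:=F(x^k)$ and pick any $x^{k+1}\in\mathrm{prox}_{\alpha_k(f-C_kg)}(x^k-\alpha_k\nabla h(x^k))$. *)

theory Defs
  imports "HOL-Analysis.Analysis"
begin

definition edom :: "('a \<Rightarrow> ereal) \<Rightarrow> 'a set" where
  "edom f = {x. f x < \<infinity>}"

definition proper_fun :: "('a \<Rightarrow> ereal) \<Rightarrow> bool" where
  "proper_fun f \<longleftrightarrow> (\<forall>x. f x \<noteq> -\<infinity>) \<and> (\<exists>x. f x < \<infinity>)"

definition lsc_fun :: "('a::topological_space \<Rightarrow> ereal) \<Rightarrow> bool" where
  "lsc_fun f \<longleftrightarrow> (\<forall>x. f x \<le> Liminf (at x) f)"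

definition loc_lipschitz_on :: "'a::metric_space set \<Rightarrow> ('a \<Rightarrow> 'b::real_normed_vector) \<Rightarrow> bool" where
  "loc_lipschitz_on S f \<longleftrightarrow>
     (\<forall>x\<in>S. \<exists>e>0. \<exists>K. \<forall>y\<in>ball x e \<inter> S. \<forall>z\<in>ball x e \<inter> S.
        norm (f y - f z) \<le> K * dist y z)"

definition level_bounded :: "('a::metric_space \<Rightarrow> ereal) \<Rightarrow> bool" where
  "level_bounded F \<longleftrightarrow> (\<forall>a::real. bounded {x. F x \<le> ereal a})"

definition prox :: "('a::real_normed_vector \<Rightarrow> ereal) \<Rightarrow> 'a \<Rightarrow> 'a set" where
  "prox \<phi> x = {u. \<forall>v. \<phi> u + ereal (norm (u - x)^2 / 2) \<le> \<phi> v + ereal (norm (v - x)^2 / 2)}"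

definition Omg :: "('a \<Rightarrow> real) \<Rightarrow> 'a set" where
  "Omg g = {x. g x \<noteq> 0}"

definition Fobj :: "('a \<Rightarrow> ereal) \<Rightarrow> ('a \<Rightarrow> real) \<Rightarrow> ('a \<Rightarrow> real) \<Rightarrow> 'a \<Rightarrow> ereal" where
  "Fobj f g h x = (if x \<in> Omg g \<inter> edom f
                   then ereal ((real_of_ereal (f x) + h x) / g x) else \<infinity>)"

end

theory Submission
  imports Defs
begin

text \<open>
  Writing \<open>C = F(z)\<close>, the point \<open>z\<close> is a root of \<open>f + h - C g\<close>. The parametrized step is a
  proximal-gradient step on \<open>f - C g + h\<close>; comparing the prox objective at the new point \<open>y\<close> with
  its value at \<open>z\<close> and bounding \<open>h\<close> by the descent lemma gives
  \<open>f(y) + h(y) + (1/\<alpha> - L)/2 \<parallel>y - z\<parallel>\<^sup>2 \<le> C g(y)\<close>. Since \<open>f + h \<ge> 0\<close>, this forces \<open>g(y) > 0\<close>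
  unless \<open>y = z\<close>, and dividing by \<open>g(y)\<close> yields the sufficient decrease (i). Hence
  \<open>F(x\<^sup>k)\<close> is nonnegative and nonincreasing, so it converges (ii), and its decrements, which
  dominate half the terms in (iii), tend to zero.
\<close>

lemma lipschitz_gradient_upper_bound:
  fixes h :: "'a::real_inner \<Rightarrow> real" and gradh :: "'a \<Rightarrow> 'a"
  assumes deriv: "\<And>u. (h has_derivative (\<lambda>v. gradh u \<bullet> v)) (at u)"
    and lip: "\<And>u v. norm (gradh u - gradh v) \<le> L * dist u v"
  shows "h y \<le> h z + gradh z \<bullet> (y - z) + L / 2 * (norm (y - z))\<^sup>2"
proof -
  define d where "d = y - z"
  define \<phi> where "\<phi> t = h (z + t *\<^sub>R d) - t * (gradh z \<bullet> d) - L / 2 * t\<^sup>2 * (norm d)\<^sup>2" for t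
  have "\<phi> 1 \<le> \<phi> 0"
  proof (rule DERIV_nonpos_imp_nonincreasing[of 0 1 \<phi>])
    fix t :: real
    assume t: "0 \<le> t" "t \<le> 1"
    have "((\<lambda>t. h (z + t *\<^sub>R d)) has_real_derivative gradh (z + t *\<^sub>R d) \<bullet> d) (at t)"
      unfolding has_real_derivative_iff_has_vector_derivative has_vector_derivative_def
      by (rule has_derivative_eq_rhs[OF has_derivative_compose[OF _ deriv]])
         (auto intro!: derivative_eq_intros simp: inner_scaleR_right)
    then have "(\<phi> has_real_derivative gradh (z + t *\<^sub>R d) \<bullet> d - gradh z \<bullet> d - L * t * (norm d)\<^sup>2) (at t)"
      unfolding \<phi>_def by (auto intro!: derivative_eq_intros)
    moreover have "(gradh (z + t *\<^sub>R d) - gradh z) \<bullet> d \<le> L * t * (norm d)\<^sup>2"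
    proof -
      have "(gradh (z + t *\<^sub>R d) - gradh z) \<bullet> d \<le> norm (gradh (z + t *\<^sub>R d) - gradh z) * norm d"
        by (rule norm_cauchy_schwarz)
      also have "\<dots> \<le> L * dist (z + t *\<^sub>R d) z * norm d"
        by (rule mult_right_mono[OF lip]) simp
      also have "\<dots> = L * t * (norm d)\<^sup>2"
        using t by (simp add: dist_norm power2_eq_square)
      finally show ?thesis .
    qed
    ultimately show "\<exists>y. (\<phi> has_real_derivative y) (at t) \<and> y \<le> 0"
      by (auto simp: inner_diff_left)
  qed simp
  then show ?thesis
    unfolding \<phi>_def d_def by (simp add: algebra_simps)
qed

lemma prox_gradient_step_bound:
  fixes \<phi> :: "'a::real_inner \<Rightarrow> ereal"
  assumes y: "y \<in> prox (\<lambda>u. ereal a * \<phi> u) (z - a *\<^sub>R v)"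
    and a: "0 < a" and \<phi>z: "\<phi> z = ereal c" and \<phi>y: "\<phi> y \<noteq> -\<infinity>"
  obtains p where "\<phi> y = ereal p" and "p + v \<bullet> (y - z) + (norm (y - z))\<^sup>2 / (2 * a) \<le> c"
proof -
  define w where "w = z - a *\<^sub>R v"
  have "ereal a * \<phi> y + ereal ((norm (y - w))\<^sup>2 / 2) \<le> ereal a * \<phi> z + ereal ((norm (z - w))\<^sup>2 / 2)"
    using y unfolding prox_def w_def by blast
  also have "\<dots> = ereal (a * c + (norm (z - w))\<^sup>2 / 2)"
    using \<phi>z by simp
  finally have cmp: "ereal a * \<phi> y + ereal ((norm (y - w))\<^sup>2 / 2) \<le> ereal (a * c + (norm (z - w))\<^sup>2 / 2)" .
  have "\<phi> y \<noteq> \<infinity>"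
    using cmp a by auto
  with \<phi>y obtain p where p: "\<phi> y = ereal p"
    by (cases "\<phi> y") auto
  have "a * p + (norm (y - w))\<^sup>2 / 2 \<le> a * c + (norm (z - w))\<^sup>2 / 2"
    using cmp p by simp
  moreover have "(norm (y - w))\<^sup>2 = (norm (y - z))\<^sup>2 + 2 * a * (v \<bullet> (y - z)) + a\<^sup>2 * (norm v)\<^sup>2"
    unfolding w_def power2_norm_eq_inner
    by (simp add: algebra_simps inner_diff_left inner_diff_right inner_commute power2_eq_square)
  moreover have "(norm (z - w))\<^sup>2 = a\<^sup>2 * (norm v)\<^sup>2"
    unfolding w_def by (simp add: power_mult_distrib)
  ultimately have "a * p + a * (v \<bullet> (y - z)) + (norm (y - z))\<^sup>2 / 2 \<le> a * c"
    by (simp add: add_divide_distrib)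
  then have "(a * p + a * (v \<bullet> (y - z)) + (norm (y - z))\<^sup>2 / 2) / a \<le> c"
    using a by (simp add: pos_divide_le_eq mult.commute)
  moreover have "(a * p + a * (v \<bullet> (y - z)) + (norm (y - z))\<^sup>2 / 2) / a
      = p + v \<bullet> (y - z) + (norm (y - z))\<^sup>2 / (2 * a)"
    using a by (simp add: field_simps)
  ultimately show ?thesis
    using p that by simp
qed

lemma parametrized_step_estimate:
  fixes f :: "'a::real_inner \<Rightarrow> ereal" and g h :: "'a \<Rightarrow> real" and gradh :: "'a \<Rightarrow> 'a"
  assumes proper: "proper_fun f"
    and deriv: "\<And>u. (h has_derivative (\<lambda>v. gradh u \<bullet> v)) (at u)"
    and lip: "\<And>u v. norm (gradh u - gradh v) \<le> L * dist u v"
    and z: "f z = ereal fz" and C: "C * g z = fz + h z" and a: "0 < a"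
    and y: "y \<in> prox (\<lambda>u. ereal a * (f u - ereal (C * g u))) (z - a *\<^sub>R gradh z)"
  obtains fy where "f y = ereal fy"
    and "fy + h y + (1 / a - L) / 2 * (norm (y - z))\<^sup>2 \<le> C * g y"
proof -
  have "f z - ereal (C * g z) = ereal (- h z)"
    using z C by simp
  moreover have "f y - ereal (C * g y) \<noteq> -\<infinity>"
    using proper unfolding proper_fun_def by (cases "f y") auto
  ultimately obtain p where p: "f y - ereal (C * g y) = ereal p"
    and bound: "p + gradh z \<bullet> (y - z) + (norm (y - z))\<^sup>2 / (2 * a) \<le> - h z"
    by (rule prox_gradient_step_bound[OF y a])
  have fy: "f y = ereal (p + C * g y)"
    using p by (cases "f y") auto
  have "h y \<le> h z + gradh z \<bullet> (y - z) + L / 2 * (norm (y - z))\<^sup>2"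
    by (rule lipschitz_gradient_upper_bound[OF deriv lip])
  moreover have "(1 / a - L) / 2 * (norm (y - z))\<^sup>2 = (norm (y - z))\<^sup>2 / (2 * a) - L / 2 * (norm (y - z))\<^sup>2"
    using a by (simp add: field_simps)
  ultimately show ?thesis
    using that[OF fy] bound by linarith
qed

lemma Fobj_eq:
  "u \<in> Omg g \<inter> edom f \<Longrightarrow> Fobj f g h u = ereal ((real_of_ereal (f u) + h u) / g u)"
  by (simp add: Fobj_def)

lemma Fobj_nonneg:
  assumes proper: "proper_fun f"
    and pos: "\<And>u. u \<in> Omg g \<inter> edom f \<Longrightarrow> g u > 0"
    and nonneg: "\<And>u. u \<in> edom f \<Longrightarrow> f u + ereal (h u) \<ge> 0"
    and u: "u \<in> Omg g \<inter> edom f"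
  shows "0 \<le> real_of_ereal (Fobj f g h u)"
proof -
  obtain fu where "f u = ereal fu"
    using u proper unfolding edom_def proper_fun_def by (cases "f u") auto
  with nonneg[of u] pos[OF u] u show ?thesis
    by (simp add: Fobj_eq)
qed

lemma parametrized_step_decrease:
  fixes f :: "'a::real_inner \<Rightarrow> ereal" and g h :: "'a \<Rightarrow> real" and gradh :: "'a \<Rightarrow> 'a"
  assumes proper: "proper_fun f"
    and deriv: "\<And>u. (h has_derivative (\<lambda>v. gradh u \<bullet> v)) (at u)"
    and lip: "\<And>u v. norm (gradh u - gradh v) \<le> L * dist u v"
    and pos: "\<And>u. u \<in> Omg g \<inter> edom f \<Longrightarrow> g u > 0"
    and nonneg: "\<And>u. u \<in> edom f \<Longrightarrow> f u + ereal (h u) \<ge> 0"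
    and z: "z \<in> Omg g \<inter> edom f" and a: "0 < a" "a * L < 1"
    and y: "y \<in> prox (\<lambda>u. ereal a * (f u - ereal (real_of_ereal (Fobj f g h z) * g u)))
                      (z - a *\<^sub>R gradh z)"
  shows "y \<in> Omg g \<inter> edom f"
    and "Fobj f g h y + ereal ((1 / a - L) / (2 * g y) * (norm (y - z))\<^sup>2) \<le> Fobj f g h z"
    and "0 \<le> (1 / a - L) / (2 * g y) * (norm (y - z))\<^sup>2"
proof -
  define C where "C = real_of_ereal (Fobj f g h z)"
  obtain fz where fz: "f z = ereal fz"
    using z proper unfolding edom_def proper_fun_def by (cases "f z") auto
  have "C * g z = fz + h z"
    using pos[OF z] z fz by (simp add: C_def Fobj_eq)
  then obtain fy where fy: "f y = ereal fy"
    and est: "fy + h y + (1 / a - L) / 2 * (norm (y - z))\<^sup>2 \<le> C * g y"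
    using parametrized_step_estimate[OF proper deriv lip fz _ a(1)] y unfolding C_def by blast
  have y_dom: "y \<in> edom f"
    using fy by (simp add: edom_def)
  have gap: "0 < 1 / a - L"
    using a by (simp add: field_simps)
  have "g y \<noteq> 0"
  proof (cases "y = z")
    case True
    with z show ?thesis by (simp add: Omg_def)
  next
    case False
    then have "0 < (1 / a - L) / 2 * (norm (y - z))\<^sup>2"
      using gap by simp
    moreover have "0 \<le> fy + h y"
      using nonneg[OF y_dom] fy by simp
    ultimately have "0 < C * g y"
      using est by linarith
    then show ?thesis
      by auto
  qed
  then show y_in: "y \<in> Omg g \<inter> edom f"
    using y_dom by (simp add: Omg_def)
  have "(fy + h y) / g y + (1 / a - L) / (2 * g y) * (norm (y - z))\<^sup>2
      = (fy + h y + (1 / a - L) / 2 * (norm (y - z))\<^sup>2) / g y"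
    using \<open>g y \<noteq> 0\<close> by (simp add: field_simps)
  also have "\<dots> \<le> C"
    using est pos[OF y_in] by (simp add: divide_le_eq)
  finally have "(fy + h y) / g y + (1 / a - L) / (2 * g y) * (norm (y - z))\<^sup>2 \<le> C" .
  then show "Fobj f g h y + ereal ((1 / a - L) / (2 * g y) * (norm (y - z))\<^sup>2) \<le> Fobj f g h z"
    using y_in z fy by (simp add: C_def Fobj_eq)
  show "0 \<le> (1 / a - L) / (2 * g y) * (norm (y - z))\<^sup>2"
    using gap pos[OF y_in] by simp
qed

lemma sufficient_decrease_limits:
  fixes r s :: "nat \<Rightarrow> real"
  assumes decrease: "\<And>k. r (Suc k) + s k \<le> r k"
    and r_nonneg: "\<And>k. 0 \<le> r k" and s_nonneg: "\<And>k. 0 \<le> s k"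
  obtains C where "0 \<le> C" "r \<longlonglongrightarrow> C" "s \<longlonglongrightarrow> 0"
proof -
  have "r (Suc k) \<le> r k" for k
    using decrease[of k] s_nonneg[of k] by linarith
  then have "decseq r"
    by (simp add: decseq_Suc_iff)
  then obtain C where C: "r \<longlonglongrightarrow> C"
    using decseq_convergent r_nonneg by blast
  have "0 \<le> C"
    using C r_nonneg by (simp add: LIMSEQ_le_const)
  moreover have "(\<lambda>k. r k - r (Suc k)) \<longlonglongrightarrow> C - C"
    by (intro tendsto_diff C LIMSEQ_Suc)
  then have "s \<longlonglongrightarrow> 0"
    by (intro real_tendsto_sandwich[of "\<lambda>_. 0" s _ "\<lambda>k. r k - r (Suc k)"] always_eventually allI)
       (use decrease s_nonneg in \<open>auto simp: algebra_simps\<close>)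
  ultimately show ?thesis
    using C that by blast
qed

lemma step_size_bounds:
  fixes a L al au :: real
  assumes "0 < al" "al \<le> a" "a \<le> au" "au < 1 / L" "0 < L"
  shows "0 < a" "a * L < 1"
proof -
  show "0 < a"
    using assms by linarith
  have "a * L \<le> au * L"
    using assms by (simp add: mult_right_mono)
  also have "\<dots> < 1"
    using assms by (simp add: field_simps)
  finally show "a * L < 1" .
qed

theorem mainTheorem9:
  fixes f :: "real^'n \<Rightarrow> ereal"
    and g h :: "real^'n \<Rightarrow> real"
    and gradg gradh :: "real^'n \<Rightarrow> real^'n"
    and L al au :: real
    and \<alpha> :: "nat \<Rightarrow> real"
    and x :: "nat \<Rightarrow> real^'n"
  assumes proper: "proper_fun f" and lsc: "lsc_fun f"
    and A1: "loc_lipschitz_on (edom f \<inter> Omg g) (\<lambda>u. real_of_ereal (f u))"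
    and A2_deriv: "\<And>u. (g has_derivative (\<lambda>v. gradg u \<bullet> v)) (at u)"
    and A2_lip: "loc_lipschitz_on UNIV gradg"
    and A2_pos: "\<And>u. u \<in> Omg g \<inter> edom f \<Longrightarrow> g u > 0"
    and A3_deriv: "\<And>u. (h has_derivative (\<lambda>v. gradh u \<bullet> v)) (at u)"
    and A3_lip: "\<And>u v. norm (gradh u - gradh v) \<le> L * dist u v"
    and L_pos: "L > 0"
    and A4_nonneg: "\<And>u. u \<in> edom f \<Longrightarrow> f u + ereal (h u) \<ge> 0"
    and A4_ne: "Omg g \<inter> edom f \<noteq> {}"
    and A5: "\<And>z \<gamma>. \<gamma> \<ge> 0 \<Longrightarrow> prox (\<lambda>u. f u - ereal (\<gamma> * g u)) z \<noteq> {}"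
    and A6_lsc: "lsc_fun (Fobj f g h)"
    and A6_lb: "level_bounded (Fobj f g h)"
    and x0: "x 0 \<in> Omg g \<inter> edom f"
    and al_pos: "0 < al" and al_le: "\<And>k. al \<le> \<alpha> k" and au_ge: "\<And>k. \<alpha> k \<le> au"
    and au_lt: "au < 1 / L"
    and step: "\<And>k. x (Suc k) \<in> prox
       (\<lambda>u. ereal (\<alpha> k) * (f u - ereal (real_of_ereal (Fobj f g h (x k)) * g u)))
       (x k - \<alpha> k *\<^sub>R gradh (x k))"
  shows "(\<forall>k. x k \<in> edom (Fobj f g h))
    \<and> (\<forall>k. Fobj f g h (x (Suc k))
            + ereal ((1 / \<alpha> k - L) / (2 * g (x (Suc k))) * (norm (x (Suc k) - x k))^2)
          \<le> Fobj f g h (x k))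
    \<and> (\<exists>C::real. C \<ge> 0 \<and> (\<lambda>k. real_of_ereal (Fobj f g h (x k))) \<longlonglongrightarrow> C
                      \<and> (\<lambda>k. Fobj f g h (x k)) \<longlonglongrightarrow> ereal C)
    \<and> (\<lambda>k. (1 / \<alpha> k - L) / g (x (Suc k)) * (norm (x (Suc k) - x k))^2) \<longlonglongrightarrow> 0"
proof -
  let ?F = "Fobj f g h"
  define r where "r k = real_of_ereal (?F (x k))" for k
  define t where "t k = (1 / \<alpha> k - L) / (2 * g (x (Suc k))) * (norm (x (Suc k) - x k))\<^sup>2" for k
  have step_decrease: "x (Suc k) \<in> Omg g \<inter> edom f" "?F (x (Suc k)) + ereal (t k) \<le> ?F (x k)" "0 \<le> t k"
    if "x k \<in> Omg g \<inter> edom f" for k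
    using parametrized_step_decrease[where f = f and g = g and h = h, OF proper A3_deriv A3_lip
        A2_pos A4_nonneg that step_size_bounds[OF al_pos al_le au_ge au_lt L_pos] step]
    unfolding t_def by simp_all
  have dom: "x k \<in> Omg g \<inter> edom f" for k
    by (induction k) (use x0 step_decrease(1) in auto)
  have F_finite: "?F (x k) = ereal (r k)" for k
    using dom[of k] by (simp add: r_def Fobj_eq)
  have r_decrease: "r (Suc k) + t k \<le> r k" for k
    using step_decrease(2)[OF dom] by (simp add: F_finite)
  have r_nonneg: "0 \<le> r k" for k
    unfolding r_def by (rule Fobj_nonneg[OF proper A2_pos A4_nonneg dom])
  obtain C where C: "0 \<le> C" "r \<longlonglongrightarrow> C" "t \<longlonglongrightarrow> 0"
    by (rule sufficient_decrease_limits[of r t, OF r_decrease r_nonneg step_decrease(3)[OF dom]])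
  have "(\<lambda>k. (1 / \<alpha> k - L) / g (x (Suc k)) * (norm (x (Suc k) - x k))\<^sup>2) \<longlonglongrightarrow> 0"
    using tendsto_mult_right_zero[OF C(3), of 2] by (simp add: t_def mult.assoc)
  moreover have "\<forall>k. x k \<in> edom ?F"
    using F_finite by (simp add: edom_def)
  moreover have "(\<lambda>k. real_of_ereal (?F (x k))) \<longlonglongrightarrow> C" "(\<lambda>k. ?F (x k)) \<longlonglongrightarrow> ereal C"
    using C(2) by (simp_all add: F_finite tendsto_ereal)
  ultimately show ?thesis
    using C(1) step_decrease(2)[OF dom] unfolding t_def by blast
qed

end
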